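(* Call two $n\times n$ matrices $B_1,B_2$ equivalent if there is an $n\times n$ permutation matrix $P$ with $P^{T}B_1P=B_2$. Then for each positive integer $n$, the number of equivalence classes of $n\times n$ $(0,1)$-matrices all of whose eigenvalues are positive real numbers equals the number of acyclic digraphs with $n$ unlabeled vertices (i.e. the number of isomorphism classes of acyclic digraphs on $n$ vertices).
   Context: A digraph has, for each ordered pair of vertices $(i,j)$, at most one edge from $i$ to $j$; loops and pairs of opposite edges are permitted, parallel edges are not. A digraph is acyclic if it contains no directed cycle of any length, including loops (cycles of length $1$) and cycles of length $2$. Eigenvalues are taken over $\mathbb{C}$. *)

theory Defs
  imports "Jordan_Normal_Form.Char_Poly"
begin

definition perm_matrix :: "nat \<Rightarrow> complex mat \<Rightarrow> bool" where
  "perm_matrix n P \<longleftrightarrow> (\<exists>p. p permutes {..<n} \<and>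
      P = mat n n (\<lambda>(i, j). if p i = j then 1 else 0))"

definition zero_one_mats :: "nat \<Rightarrow> complex mat set" where
  "zero_one_mats n = {B. B \<in> carrier_mat n n \<and>
      (\<forall>i<n. \<forall>j<n. B $$ (i, j) = 0 \<or> B $$ (i, j) = 1)}"

definition all_eigenvalues_positive_real :: "complex mat \<Rightarrow> bool" where
  "all_eigenvalues_positive_real B \<longleftrightarrow>
      (\<forall>k. eigenvalue B k \<longrightarrow> k \<in> \<real> \<and> Re k > 0)"

definition perm_equiv :: "nat \<Rightarrow> complex mat \<Rightarrow> complex mat \<Rightarrow> bool" where
  "perm_equiv n B1 B2 \<longleftrightarrow> (\<exists>P. perm_matrix n P \<and> transpose_mat P * B1 * P = B2)"

definition pos_eig_01_mats :: "nat \<Rightarrow> complex mat set" where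
  "pos_eig_01_mats n = {B \<in> zero_one_mats n. all_eigenvalues_positive_real B}"

definition num_pos_eig_01_classes :: "nat \<Rightarrow> nat" where
  "num_pos_eig_01_classes n =
     card (pos_eig_01_mats n // {(B1, B2). B1 \<in> pos_eig_01_mats n \<and> B2 \<in> pos_eig_01_mats n
                                          \<and> perm_equiv n B1 B2})"

text \<open>Digraphs on the vertex set {0..<n}: edge relations (loops and opposite edges
  allowed, no parallel edges). Acyclic = no directed cycle, including loops: library acyclic.\<close>
definition acyclic_digraphs :: "nat \<Rightarrow> (nat \<times> nat) set set" where
  "acyclic_digraphs n = {E. E \<subseteq> {..<n} \<times> {..<n} \<and> acyclic E}"

definition digraph_iso :: "nat \<Rightarrow> (nat \<times> nat) set \<Rightarrow> (nat \<times> nat) set \<Rightarrow> bool" where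
  "digraph_iso n E1 E2 \<longleftrightarrow> (\<exists>f. bij_betw f {..<n} {..<n} \<and> E2 = map_prod f f ` E1)"

definition num_unlabeled_acyclic_digraphs :: "nat \<Rightarrow> nat" where
  "num_unlabeled_acyclic_digraphs n =
     card (acyclic_digraphs n // {(E1, E2). E1 \<in> acyclic_digraphs n \<and> E2 \<in> acyclic_digraphs n
                                          \<and> digraph_iso n E1 E2})"

end

theory Submission
  imports Defs "Jordan_Normal_Form.Schur_Decomposition" "Jordan_Normal_Form.Jordan_Normal_Form_Uniqueness"
begin

(* E \<mapsto> I + A(E) is a bijection from acyclic digraphs on {0..<n} onto the (0,1)-matrices with
   positive real eigenvalues, and it turns relabelling by a permutation p into conjugation by the
   permutation matrix of p; so both quotients have equally many classes.

   If E is acyclic, every eigenvalue of I + A(E) is 1: at a vertex of the support of an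
   eigenvector with no successor in that support, the eigenvalue equation reads k v_i = v_i.
   Conversely, if the eigenvalues of a (0,1)-matrix B are positive reals, their product det B is
   a positive integer and their sum tr B is at most n, so by AM-GM they all equal 1, and then
   tr B = n forces a unit diagonal. Hence B - I is a nilpotent (0,1)-matrix; as its k-th power
   is positive wherever the digraph of B - I has a walk of length k, that digraph is acyclic. *)

lemma card_quotient_bij_betw:
  assumes bij: "bij_betw f X Y"
    and rel: "\<And>x y. x \<in> X \<Longrightarrow> y \<in> X \<Longrightarrow> R x y \<longleftrightarrow> S (f x) (f y)"
  shows "card (X // {(a, b). a \<in> X \<and> b \<in> X \<and> R a b})
       = card (Y // {(a, b). a \<in> Y \<and> b \<in> Y \<and> S a b})"
proof -
  let ?R = "{(a, b). a \<in> X \<and> b \<in> X \<and> R a b}"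
  let ?S = "{(a, b). a \<in> Y \<and> b \<in> Y \<and> S a b}"
  have inj: "inj_on f X" and fX: "f ` X = Y" using bij by (auto simp: bij_betw_def)
  have class_image: "f ` (?R `` {x}) = ?S `` {f x}" if "x \<in> X" for x
    using that rel fX by (auto simp: image_iff)
  have "image f ` (X // ?R) = (\<lambda>x. ?S `` {f x}) ` X"
    unfolding quotient_def UNION_singleton_eq_range image_image
    by (rule image_cong[OF refl class_image])
  also have "\<dots> = Y // ?S"
    unfolding quotient_def UNION_singleton_eq_range fX[symmetric] image_image ..
  finally have "image f ` (X // ?R) = Y // ?S" .
  moreover have "inj_on (image f) (X // ?R)"
    by (rule inj_on_subset[OF inj_on_image_Pow[OF inj]]) (auto simp: quotient_def)
  then have "card (image f ` (X // ?R)) = card (X // ?R)"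
    by (rule card_image)
  ultimately show ?thesis by simp
qed

section \<open>Permutation matrices and relabelled digraphs\<close>

definition perm_mat :: "nat \<Rightarrow> (nat \<Rightarrow> nat) \<Rightarrow> 'a :: {zero, one} mat" where
  "perm_mat n p = mat n n (\<lambda>(i, j). if p i = j then 1 else 0)"

lemma perm_mat_carrier [simp]: "perm_mat n p \<in> carrier_mat n n"
  and dim_perm_mat [simp]: "dim_row (perm_mat n p) = n" "dim_col (perm_mat n p) = n"
  by (simp_all add: perm_mat_def)

lemma perm_matrix_iff: "perm_matrix n P \<longleftrightarrow> (\<exists>p. p permutes {..<n} \<and> P = perm_mat n p)"
  by (simp add: perm_matrix_def perm_mat_def)

lemma mult_perm_mat_index:
  fixes C :: "'a :: semiring_1 mat"
  assumes p: "p permutes {..<n}" and C: "C \<in> carrier_mat m n" and i: "i < m" and j: "j < n"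
  shows "(C * perm_mat n p) $$ (i, j) = C $$ (i, inv_into UNIV p j)"
proof -
  have "(C * perm_mat n p) $$ (i, j) = (\<Sum>l\<in>{0..<n}. C $$ (i, l) * (if p l = j then 1 else 0))"
    using C i j by (simp add: perm_mat_def scalar_prod_def)
  also have "\<dots> = (\<Sum>l\<in>{0..<n}. if l = inv_into UNIV p j then C $$ (i, l) else 0)"
    using permutes_inv_eq[OF p, of j] by (intro sum.cong refl) (auto simp: permutes_inverses[OF p])
  also have "\<dots> = C $$ (i, inv_into UNIV p j)"
    using j permutes_in_image[OF permutes_inv[OF p]] by simp
  finally show ?thesis .
qed

lemma transpose_perm_mat_mult_index:
  fixes C :: "'a :: semiring_1 mat"
  assumes p: "p permutes {..<n}" and C: "C \<in> carrier_mat n m" and i: "i < n" and j: "j < m"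
  shows "(transpose_mat (perm_mat n p) * C) $$ (i, j) = C $$ (inv_into UNIV p i, j)"
proof -
  have "(transpose_mat (perm_mat n p) * C) $$ (i, j)
      = (\<Sum>l\<in>{0..<n}. (if p l = i then 1 else 0) * C $$ (l, j))"
    using C i j by (simp add: perm_mat_def scalar_prod_def)
  also have "\<dots> = (\<Sum>l\<in>{0..<n}. if l = inv_into UNIV p i then C $$ (l, j) else 0)"
    using permutes_inv_eq[OF p, of i] by (intro sum.cong refl) (auto simp: permutes_inverses[OF p])
  also have "\<dots> = C $$ (inv_into UNIV p i, j)"
    using i permutes_in_image[OF permutes_inv[OF p]] by simp
  finally show ?thesis .
qed

lemma perm_mat_conjugate:
  fixes C :: "'a :: semiring_1 mat"
  assumes p: "p permutes {..<n}" and C: "C \<in> carrier_mat n n"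
  shows "transpose_mat (perm_mat n p) * C * perm_mat n p
       = mat n n (\<lambda>(i, j). C $$ (inv_into UNIV p i, inv_into UNIV p j))" (is "_ = ?M")
proof (rule eq_matI)
  fix i j assume "i < dim_row ?M" and "j < dim_col ?M"
  then have i: "i < n" and j: "j < n" by auto
  have TC: "transpose_mat (perm_mat n p) * C \<in> carrier_mat n n"
    by (intro mult_carrier_mat[OF _ C]) simp
  have "(transpose_mat (perm_mat n p) * C * perm_mat n p) $$ (i, j)
      = (transpose_mat (perm_mat n p) * C) $$ (i, inv_into UNIV p j)"
    by (rule mult_perm_mat_index[OF p TC i j])
  also have "\<dots> = C $$ (inv_into UNIV p i, inv_into UNIV p j)"
    using transpose_perm_mat_mult_index[OF p C i] permutes_in_image[OF permutes_inv[OF p]] j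
    by simp
  finally show "(transpose_mat (perm_mat n p) * C * perm_mat n p) $$ (i, j) = ?M $$ (i, j)"
    using i j by simp
qed (simp_all add: perm_mat_def)

definition adj_mat :: "nat \<Rightarrow> (nat \<times> nat) set \<Rightarrow> 'a :: {zero, one} mat" where
  "adj_mat n E = mat n n (\<lambda>(i, j). if (i, j) \<in> E then 1 else 0)"

lemma adj_mat_carrier [simp]: "adj_mat n E \<in> carrier_mat n n"
  and dim_adj_mat [simp]: "dim_row (adj_mat n E) = n" "dim_col (adj_mat n E) = n"
  by (simp_all add: adj_mat_def)

lemma adj_mat_index [simp]:
  "i < n \<Longrightarrow> j < n \<Longrightarrow> adj_mat n E $$ (i, j) = (if (i, j) \<in> E then 1 else 0)"
  by (simp add: adj_mat_def)

definition off_diag_edges :: "nat \<Rightarrow> 'a :: one mat \<Rightarrow> (nat \<times> nat) set" where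
  "off_diag_edges n B = {(i, j). i < n \<and> j < n \<and> i \<noteq> j \<and> B $$ (i, j) = 1}"

lemma off_diag_edges_one_plus_adj_mat:
  assumes "E \<subseteq> {..<n} \<times> {..<n}" and "\<And>i. (i, i) \<notin> E"
  shows "off_diag_edges n (1\<^sub>m n + adj_mat n E :: 'a :: semiring_1 mat) = E"
  using assms by (force simp: off_diag_edges_def split: if_splits)

lemma one_plus_adj_mat_off_diag_edges:
  assumes B: "B \<in> zero_one_mats n" and diag: "\<And>i. i < n \<Longrightarrow> B $$ (i, i) = 1"
  shows "1\<^sub>m n + adj_mat n (off_diag_edges n B) = B"
proof (rule eq_matI)
  fix i j assume "i < dim_row B" "j < dim_col B"
  then have "i < n" "j < n"
    using B by (auto simp: zero_one_mats_def)
  moreover from this have "B $$ (i, j) = 0 \<or> B $$ (i, j) = 1"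
    using B by (simp add: zero_one_mats_def)
  ultimately show "(1\<^sub>m n + adj_mat n (off_diag_edges n B)) $$ (i, j) = B $$ (i, j)"
    using diag by (auto simp: off_diag_edges_def)
qed (use B in \<open>auto simp: zero_one_mats_def\<close>)

lemma one_plus_adj_mat_conjugate:
  assumes p: "p permutes {..<n}"
  shows "transpose_mat (perm_mat n p) * (1\<^sub>m n + adj_mat n E) * perm_mat n p
       = (1\<^sub>m n + adj_mat n (map_prod p p ` E) :: 'a :: semiring_1 mat)" (is "_ = ?M")
proof (rule eq_matI)
  fix i j assume "i < dim_row ?M" and "j < dim_col ?M"
  then have i: "i < n" and j: "j < n" by auto
  have "(inv_into UNIV p i, inv_into UNIV p j) \<in> E \<longleftrightarrow> (i, j) \<in> map_prod p p ` E"
  proof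
    assume "(inv_into UNIV p i, inv_into UNIV p j) \<in> E"
    then have "map_prod p p (inv_into UNIV p i, inv_into UNIV p j) \<in> map_prod p p ` E"
      by (rule imageI)
    then show "(i, j) \<in> map_prod p p ` E"
      by (simp add: permutes_inverses[OF p])
  qed (auto simp: permutes_inverses[OF p])
  moreover have "inv_into UNIV p i = inv_into UNIV p j \<longleftrightarrow> i = j"
    using permutes_inj[OF permutes_inv[OF p]] by (auto dest: injD)
  ultimately show "(transpose_mat (perm_mat n p) * (1\<^sub>m n + adj_mat n E) * perm_mat n p) $$ (i, j)
      = ?M $$ (i, j)"
    using i j permutes_in_image[OF permutes_inv[OF p]]
    by (simp add: perm_mat_conjugate[OF p])
qed (simp_all add: perm_mat_def)

lemma digraph_iso_iff_perm_equiv: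
  assumes E1: "E1 \<subseteq> {..<n} \<times> {..<n}" "\<And>i. (i, i) \<notin> E1"
    and E2: "E2 \<subseteq> {..<n} \<times> {..<n}" "\<And>i. (i, i) \<notin> E2"
  shows "digraph_iso n E1 E2 \<longleftrightarrow> perm_equiv n (1\<^sub>m n + adj_mat n E1) (1\<^sub>m n + adj_mat n E2)"
proof
  assume "digraph_iso n E1 E2"
  then obtain f where f: "bij_betw f {..<n} {..<n}" and E2f: "E2 = map_prod f f ` E1"
    unfolding digraph_iso_def by blast
  define p where "p x = (if x < n then f x else x)" for x
  have "bij_betw p {..<n} {..<n}"
    using f by (rule bij_betw_cong[THEN iffD1, rotated]) (simp add: p_def)
  then have p: "p permutes {..<n}" by (rule bij_imp_permutes) (simp add: p_def)
  have "map_prod p p ` E1 = E2"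
    unfolding E2f using E1(1) by (intro image_cong) (auto simp: p_def)
  then show "perm_equiv n (1\<^sub>m n + adj_mat n E1) (1\<^sub>m n + adj_mat n E2)"
    unfolding perm_equiv_def perm_matrix_iff using one_plus_adj_mat_conjugate[OF p] p by metis
next
  assume "perm_equiv n (1\<^sub>m n + adj_mat n E1) (1\<^sub>m n + adj_mat n E2)"
  then obtain p where p: "p permutes {..<n}"
    and "1\<^sub>m n + adj_mat n (map_prod p p ` E1) = (1\<^sub>m n + adj_mat n E2 :: complex mat)"
    unfolding perm_equiv_def perm_matrix_iff using one_plus_adj_mat_conjugate by metis
  moreover have "map_prod p p ` E1 \<subseteq> {..<n} \<times> {..<n}"
    using E1(1) permutes_in_image[OF p] by auto
  moreover have "(i, i) \<notin> map_prod p p ` E1" for i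
    using E1(2) permutes_inj[OF p] by (auto dest: injD)
  ultimately have "map_prod p p ` E1 = E2"
    using off_diag_edges_one_plus_adj_mat E2 by metis
  then show "digraph_iso n E1 E2"
    unfolding digraph_iso_def using permutes_imp_bij[OF p] by blast
qed

section \<open>Eigenvalues of acyclic digraphs\<close>

lemma acyclic_no_loop: "acyclic E \<Longrightarrow> (i, i) \<notin> E"
  by (auto simp: acyclic_def)

lemma eigenvalue_diag_if_acyclic_support:
  fixes A :: "'a :: idom mat"
  assumes A: "A \<in> carrier_mat n n" and acyc: "acyclic E"
    and support: "\<And>i j. i < n \<Longrightarrow> j < n \<Longrightarrow> i \<noteq> j \<Longrightarrow> A $$ (i, j) \<noteq> 0 \<Longrightarrow> (i, j) \<in> E"
    and "eigenvalue A k"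
  shows "\<exists>i<n. k = A $$ (i, i)"
proof -
  obtain v where v: "v \<in> carrier_vec n" "v \<noteq> 0\<^sub>v n" and Av: "A *\<^sub>v v = k \<cdot>\<^sub>v v"
    using \<open>eigenvalue A k\<close> A unfolding eigenvalue_def eigenvector_def by auto
  let ?S = "{i. i < n \<and> v $ i \<noteq> 0}"
  have nonempty: "?S \<noteq> {}"
  proof
    assume "?S = {}"
    then have "v = 0\<^sub>v n" using v(1) by (intro eq_vecI) auto
    with v(2) show False ..
  qed
  have "wf ((E \<inter> {..<n} \<times> {..<n})\<inverse>)"
    using acyclic_subset[OF acyc] by (intro finite_acyclic_wf_converse) auto
  \<comment> \<open>a vertex of the support of v with no successor in the support\<close>
  from wfE_min'[OF this nonempty] obtain i where "i \<in> ?S"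
    and "\<And>j. (j, i) \<in> (E \<inter> {..<n} \<times> {..<n})\<inverse> \<Longrightarrow> j \<notin> ?S"
    by blast
  then have i: "i < n" "v $ i \<noteq> 0" and sink: "\<And>j. (i, j) \<in> E \<Longrightarrow> j < n \<Longrightarrow> v $ j = 0"
    by auto
  have off_diag: "A $$ (i, j) * v $ j = 0" if "j \<in> {0..<n} - {i}" for j
    using that support[OF i(1)] sink by fastforce
  have "k * v $ i = (A *\<^sub>v v) $ i"
    using Av v(1) i(1) by simp
  also have "\<dots> = (\<Sum>j\<in>{0..<n}. A $$ (i, j) * v $ j)"
    using A v(1) i(1) by (simp add: scalar_prod_def)
  also have "\<dots> = A $$ (i, i) * v $ i"
    using i(1) off_diag by (simp add: sum.remove[of _ i] sum.neutral)
  finally show ?thesis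
    using i by auto
qed

lemma eigenvalue_one_plus_adj_mat:
  fixes k :: "'a :: idom"
  assumes acyc: "acyclic E" and "eigenvalue (1\<^sub>m n + adj_mat n E) k"
  shows "k = 1"
proof -
  have "\<exists>i<n. k = (1\<^sub>m n + adj_mat n E) $$ (i, i)"
    using assms by (intro eigenvalue_diag_if_acyclic_support) (auto split: if_splits)
  then show ?thesis
    using acyclic_no_loop[OF acyc] by auto
qed

section \<open>Determinant, trace and nilpotency via Schur decomposition\<close>

definition mat_trace :: "'a :: semiring_0 mat \<Rightarrow> 'a" where
  "mat_trace A = (\<Sum>i\<in>{0..<dim_row A}. A $$ (i, i))"

lemma mat_trace_mult_comm:
  fixes A :: "'a :: comm_semiring_0 mat"
  assumes A: "A \<in> carrier_mat n m" and B: "B \<in> carrier_mat m n"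
  shows "mat_trace (A * B) = mat_trace (B * A)"
proof -
  have "mat_trace (A * B) = (\<Sum>i\<in>{0..<n}. \<Sum>k\<in>{0..<m}. A $$ (i, k) * B $$ (k, i))"
    using A B by (simp add: mat_trace_def scalar_prod_def)
  also have "\<dots> = (\<Sum>k\<in>{0..<m}. \<Sum>i\<in>{0..<n}. B $$ (k, i) * A $$ (i, k))"
    by (subst sum.swap) (simp add: mult.commute)
  also have "\<dots> = mat_trace (B * A)"
    using A B by (simp add: mat_trace_def scalar_prod_def)
  finally show ?thesis .
qed

lemma mat_trace_similar:
  fixes A :: "'a :: comm_semiring_1 mat"
  assumes "similar_mat A B"
  shows "mat_trace A = mat_trace B"
proof -
  from similar_matD[OF assms] obtain n P Q where
    B: "B \<in> carrier_mat n n" and P: "P \<in> carrier_mat n n" and Q: "Q \<in> carrier_mat n n"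
    and QP: "Q * P = 1\<^sub>m n" and AB: "A = P * B * Q"
    by auto
  have "mat_trace A = mat_trace (P * (B * Q))"
    unfolding AB using B P Q by (simp add: assoc_mult_mat)
  also have "\<dots> = mat_trace (B * Q * P)"
    using B P Q by (intro mat_trace_mult_comm) auto
  also have "B * Q * P = B"
    using B P Q QP by (simp add: assoc_mult_mat)
  finally show ?thesis .
qed

lemma mat_trace_eq_sum_list_diag_mat: "mat_trace A = sum_list (diag_mat A)"
  unfolding mat_trace_def diag_mat_def by (simp add: sum_list_sum_nth atLeast0LessThan)

lemma det_in_Ints:
  assumes "\<And>i j. i < dim_row A \<Longrightarrow> j < dim_col A \<Longrightarrow> A $$ (i, j) \<in> \<int>"
  shows "det A \<in> \<int>"
proof (cases "dim_row A = dim_col A")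
  case True
  have "A $$ (i, p i) \<in> \<int>" if "p permutes {0..<dim_row A}" "i \<in> {0..<dim_row A}" for p i
    using assms that True permutes_in_image[OF that(1), of i] by simp
  then show ?thesis
    unfolding det_def by (auto intro!: Ints_sum Ints_mult Ints_prod)
qed (simp add: det_def)

lemma det_trace_eq_roots_char_poly:
  fixes A :: "'a :: conjugatable_ordered_field mat"
  assumes A: "A \<in> carrier_mat n n" and char: "char_poly A = (\<Prod>a\<leftarrow>es. [:- a, 1:])"
  shows "det A = prod_list es" and "mat_trace A = sum_list es"
proof -
  obtain U P Q where "schur_decomposition A es = (U, P, Q)"
    by (cases "schur_decomposition A es") auto
  from schur_decomposition[OF A char this] have wit: "similar_mat_wit A U P Q"
    and U: "upper_triangular U" "diag_mat U = es"
    by auto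
  have sim: "similar_mat A U"
    using wit by (auto simp: similar_mat_def)
  have U_carrier: "U \<in> carrier_mat n n"
    using wit A by (auto simp: similar_mat_wit_def Let_def)
  show "det A = prod_list es"
    using det_similar[OF sim] det_upper_triangular[OF U(1) U_carrier] U(2) by simp
  show "mat_trace A = sum_list es"
    using mat_trace_similar[OF sim] mat_trace_eq_sum_list_diag_mat[of U] U(2) by simp
qed

lemma strictly_upper_triangular_pow_eq_zero:
  fixes N :: "'a :: semiring_1 mat"
  assumes N: "N \<in> carrier_mat n n"
    and strict: "\<And>i j. i < n \<Longrightarrow> j < n \<Longrightarrow> j \<le> i \<Longrightarrow> N $$ (i, j) = 0"
  shows "N ^\<^sub>m n = 0\<^sub>m n n"
proof -
  have "(N ^\<^sub>m k) $$ (i, j) = 0" if "i < n" "j < n" "j < i + k" for i j k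
    using that
  proof (induction k arbitrary: j)
    case 0
    then show ?case using N by simp
  next
    case (Suc k)
    have "(N ^\<^sub>m Suc k) $$ (i, j) = (\<Sum>l\<in>{0..<n}. (N ^\<^sub>m k) $$ (i, l) * N $$ (l, j))"
      using Suc.prems N by (simp add: scalar_prod_def)
    also have "\<dots> = 0"
    proof (rule sum.neutral, rule ballI)
      fix l assume l: "l \<in> {0..<n}"
      show "(N ^\<^sub>m k) $$ (i, l) * N $$ (l, j) = 0"
      proof (cases "l < i + k")
        case True
        then show ?thesis using Suc.IH[of l] Suc.prems l by simp
      next
        case False
        then show ?thesis using strict[of l j] Suc.prems l by simp
      qed
    qed
    finally show ?case .
  qed
  then show ?thesis
    using N by (intro eq_matI) auto
qed

lemma char_matrix_pow_eq_zero_if_single_root: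
  fixes A :: "'a :: conjugatable_ordered_field mat"
  assumes A: "A \<in> carrier_mat n n" and char: "char_poly A = (\<Prod>a\<leftarrow>es. [:- a, 1:])"
    and single: "set es \<subseteq> {e}"
  shows "char_matrix A e ^\<^sub>m n = 0\<^sub>m n n"
proof -
  obtain U P Q where "schur_decomposition A es = (U, P, Q)"
    by (cases "schur_decomposition A es") auto
  from schur_decomposition[OF A char this] have wit: "similar_mat_wit A U P Q"
    and U: "upper_triangular U" "diag_mat U = es"
    by auto
  have carrier: "U \<in> carrier_mat n n" "P \<in> carrier_mat n n" "Q \<in> carrier_mat n n"
    using wit A by (auto simp: similar_mat_wit_def Let_def)
  have diag: "U $$ (i, i) = e" if "i < n" for i
    using U(2) single carrier(1) that by (auto simp: diag_mat_def image_subset_iff)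
  have "char_matrix U e ^\<^sub>m n = 0\<^sub>m n n"
    using carrier(1) U(1) diag
    by (intro strictly_upper_triangular_pow_eq_zero) (auto simp: char_matrix_def le_less upper_triangular_def)
  then show ?thesis
    using similar_mat_wit_pow_id[OF similar_mat_wit_char_matrix[OF wit], where k = n] carrier by simp
qed

lemma all_one_if_prod_list_ge_one_sum_list_le_length:
  fixes xs :: "real list"
  assumes pos: "\<forall>x\<in>set xs. 0 < x" and prod: "1 \<le> prod_list xs" and sum: "sum_list xs \<le> length xs"
  shows "\<forall>x\<in>set xs. x = 1"
proof -
  define g where "g x = x - 1 - ln x" for x :: real
  have g_nonneg: "\<And>y. y \<in> set (map g xs) \<Longrightarrow> 0 \<le> y"
    using pos ln_le_minus_one unfolding g_def by fastforce
  have "ln (prod_list xs) = sum_list (map ln xs)"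
    using pos by (induction xs) (auto simp: ln_mult prod_list_zero_iff)
  then have "sum_list (map g xs) = sum_list xs - length xs - ln (prod_list xs)"
    unfolding g_def by (simp add: sum_list_subtractf sum_list_triv)
  also have "\<dots> \<le> 0"
    using sum ln_ge_zero[OF prod] by simp
  finally have "sum_list (map g xs) = 0"
    using sum_list_nonneg[of "map g xs", OF g_nonneg] by linarith
  then have "\<forall>x\<in>set xs. g x = 0"
    using sum_list_nonneg_eq_0_iff[of "map g xs", OF g_nonneg] by simp
  then show ?thesis
    using pos ln_eq_minus_one unfolding g_def by fastforce
qed

section \<open>Nilpotent adjacency matrices\<close>

lemma pow_mat_nonneg:
  fixes A :: "'a :: linordered_semidom mat"
  assumes A: "A \<in> carrier_mat n n" and nonneg: "\<And>i j. i < n \<Longrightarrow> j < n \<Longrightarrow> 0 \<le> A $$ (i, j)"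
    and "i < n" "j < n"
  shows "0 \<le> (A ^\<^sub>m k) $$ (i, j)"
  using \<open>j < n\<close>
proof (induction k arbitrary: j)
  case 0
  then show ?case using A \<open>i < n\<close> by simp
next
  case (Suc k)
  then show ?case
    using A nonneg \<open>i < n\<close> by (auto simp: scalar_prod_def intro!: sum_nonneg)
qed

lemma adj_mat_pow_index_ge_one:
  assumes E: "E \<subseteq> {..<n} \<times> {..<n}" and walk: "(i, j) \<in> E ^^ k" and i: "i < n"
  shows "1 \<le> (adj_mat n E ^\<^sub>m k :: 'a :: linordered_semidom mat) $$ (i, j)"
  using walk
proof (induction k arbitrary: j)
  case 0
  then show ?case using i by simp
next
  case (Suc k)
  let ?A = "adj_mat n E :: 'a mat"
  from Suc.prems obtain l where il: "(i, l) \<in> E ^^ k" and lj: "(l, j) \<in> E"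
    by auto
  then have l: "l < n" and j: "j < n"
    using E by auto
  have "1 \<le> (?A ^\<^sub>m k) $$ (i, l) * ?A $$ (l, j)"
    using Suc.IH[OF il] lj l j by simp
  also have "\<dots> \<le> (\<Sum>m\<in>{0..<n}. (?A ^\<^sub>m k) $$ (i, m) * ?A $$ (m, j))"
    using l i j by (intro member_le_sum) (auto intro!: mult_nonneg_nonneg pow_mat_nonneg[of ?A n])
  also have "\<dots> = (?A ^\<^sub>m Suc k) $$ (i, j)"
    using i j by (simp add: scalar_prod_def)
  finally show ?case .
qed

lemma pow_mat_eq_zero_mono:
  fixes A :: "'a :: semiring_1 mat"
  assumes A: "A \<in> carrier_mat n n" and "A ^\<^sub>m k = 0\<^sub>m n n" and "k \<le> l"
  shows "A ^\<^sub>m l = 0\<^sub>m n n"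
  using \<open>k \<le> l\<close>
proof (induction l rule: dec_induct)
  case base
  then show ?case using assms(2) .
next
  case (step l)
  then show ?case using A by simp
qed

lemma relpow_cycle_repeat: "(i, i) \<in> R ^^ m \<Longrightarrow> (i, i) \<in> R ^^ (m * c)"
proof (induction c)
  case 0
  then show ?case by simp
next
  case (Suc c)
  then show ?case using relpow_add[of m "m * c" R] by auto
qed

lemma acyclic_if_adj_mat_nilpotent:
  assumes E: "E \<subseteq> {..<n} \<times> {..<n}"
    and nil: "(adj_mat n E :: 'a :: linordered_semidom mat) ^\<^sub>m k = 0\<^sub>m n n"
  shows "acyclic E"
proof (rule acyclicI, intro allI notI)
  fix i assume cycle: "(i, i) \<in> E\<^sup>+"
  then obtain m where "0 < m" "(i, i) \<in> E ^^ m"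
    using trancl_power by blast
  have i: "i < n"
    using trancl_subset_Sigma[OF E] cycle by auto
  have "1 \<le> (adj_mat n E ^\<^sub>m (m * k) :: 'a mat) $$ (i, i)"
    using relpow_cycle_repeat[OF \<open>(i, i) \<in> E ^^ m\<close>] by (rule adj_mat_pow_index_ge_one[OF E _ i])
  moreover have "adj_mat n E ^\<^sub>m (m * k) = (0\<^sub>m n n :: 'a mat)"
    using pow_mat_eq_zero_mono[OF adj_mat_carrier nil] \<open>0 < m\<close> by simp
  ultimately show False
    using i by simp
qed

section \<open>(0,1)-matrices with positive real eigenvalues\<close>

lemma eigenvalue_if_root_char_poly:
  fixes A :: "'a :: field mat"
  assumes "A \<in> carrier_mat n n" and "char_poly A = (\<Prod>a\<leftarrow>es. [:- a, 1:])" and "e \<in> set es"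
  shows "eigenvalue A e"
  using assms eigenvalue_root_char_poly[OF assms(1)]
  by (simp add: poly_prod_list o_def prod_list_zero_iff)

lemma zero_one_mat_positive_roots_eq_one:
  assumes B: "B \<in> zero_one_mats n"
    and char: "char_poly B = (\<Prod>a\<leftarrow>es. [:- a, 1:])" and len: "length es = n"
    and pos: "\<And>e. e \<in> set es \<Longrightarrow> e \<in> \<real> \<and> 0 < Re e"
  shows "set es \<subseteq> {1}"
proof -
  have Bc: "B \<in> carrier_mat n n"
    and B01: "\<And>i j. i < n \<Longrightarrow> j < n \<Longrightarrow> B $$ (i, j) = 0 \<or> B $$ (i, j) = 1"
    using B by (auto simp: zero_one_mats_def)
  define xs where "xs = map Re es"
  have es: "es = map of_real xs"
    unfolding xs_def map_map
    by (rule sym, rule map_idI) (use pos in \<open>auto simp: complex_is_Real_iff complex_eq_iff\<close>)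
  have xs_pos: "\<forall>x\<in>set xs. 0 < x"
    using pos by (auto simp: xs_def)
  have "B $$ (i, j) \<in> \<int>" if "i < n" "j < n" for i j
    using B01[OF that] by auto
  then have "det B \<in> \<int>"
    using Bc by (intro det_in_Ints) auto
  then obtain d where "of_real (prod_list xs) = (of_int d :: complex)"
    using det_trace_eq_roots_char_poly(1)[OF Bc char] es by (auto elim: Ints_cases)
  then have "prod_list xs = of_int d"
    by (metis of_real_eq_iff of_real_of_int_eq)
  moreover have "0 < prod_list xs"
    using xs_pos by (induction xs) auto
  ultimately have prod: "1 \<le> prod_list xs"
    by simp
  have "sum_list xs = (\<Sum>i\<in>{0..<n}. Re (B $$ (i, i)))"
    using det_trace_eq_roots_char_poly(2)[OF Bc char] Bc es
    by (simp add: mat_trace_def flip: Re_sum)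
  also have "\<dots> \<le> (\<Sum>i\<in>{0..<n}. 1)"
    using B01 by (intro sum_mono) force
  finally have "sum_list xs \<le> length xs"
    using len by (simp add: xs_def)
  then have "\<forall>x\<in>set xs. x = 1"
    using all_one_if_prod_list_ge_one_sum_list_le_length[OF xs_pos prod] by blast
  then show ?thesis
    using es by auto
qed

lemma zero_one_mat_diag_eq_one_if_roots_eq_one:
  assumes B: "B \<in> zero_one_mats n"
    and char: "char_poly B = (\<Prod>a\<leftarrow>es. [:- a, 1:])" and len: "length es = n"
    and ones: "set es \<subseteq> {1}" and i: "i < n"
  shows "B $$ (i, i) = 1"
proof (rule ccontr)
  have Bc: "B \<in> carrier_mat n n"
    and B01: "\<And>i j. i < n \<Longrightarrow> j < n \<Longrightarrow> B $$ (i, j) = 0 \<or> B $$ (i, j) = 1"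
    using B by (auto simp: zero_one_mats_def)
  assume "B $$ (i, i) \<noteq> 1"
  then have "Re (B $$ (i, i)) < 1"
    using B01[OF i i] by auto
  then have "(\<Sum>j\<in>{0..<n}. Re (B $$ (j, j))) < (\<Sum>j\<in>{0..<n}. 1)"
    using B01 i by (intro sum_strict_mono_ex1) force+
  moreover have "es = replicate n 1"
    using ones len by (intro replicate_eqI) auto
  then have "mat_trace B = of_nat n"
    using det_trace_eq_roots_char_poly(2)[OF Bc char] by (simp add: sum_list_replicate)
  then have "(\<Sum>j\<in>{0..<n}. Re (B $$ (j, j))) = n"
    using Bc by (simp add: mat_trace_def flip: Re_sum)
  ultimately show False
    by simp
qed

lemma char_matrix_one_plus: "A \<in> carrier_mat n n \<Longrightarrow> char_matrix (1\<^sub>m n + A) 1 = A"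
  by (rule eq_matI) (auto simp: char_matrix_def)

lemma map_mat_adj_mat: "f 0 = 0 \<Longrightarrow> f 1 = 1 \<Longrightarrow> map_mat f (adj_mat n E) = adj_mat n E"
  by (rule eq_matI) auto

lemma int_adj_mat_pow_eq_zero:
  assumes "(adj_mat n E :: 'a :: {comm_ring_1, ring_char_0} mat) ^\<^sub>m k = 0\<^sub>m n n"
  shows "(adj_mat n E :: int mat) ^\<^sub>m k = 0\<^sub>m n n"
proof (rule of_int_hom.mat_hom_inj)
  have "map_mat of_int (adj_mat n E ^\<^sub>m k) = (map_mat of_int (adj_mat n E) :: 'a mat) ^\<^sub>m k"
    by (rule of_int_hom.mat_hom_pow[OF adj_mat_carrier])
  also have "\<dots> = 0\<^sub>m n n"
    using assms by (simp add: map_mat_adj_mat)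
  also have "\<dots> = map_mat of_int (0\<^sub>m n n :: int mat)"
    by (rule eq_matI) simp_all
  finally show "map_mat (of_int :: int \<Rightarrow> 'a) (adj_mat n E ^\<^sub>m k) = map_mat of_int (0\<^sub>m n n)" .
qed

lemma pos_eig_01_mat_diag_acyclic:
  assumes "B \<in> pos_eig_01_mats n"
  shows "\<And>i. i < n \<Longrightarrow> B $$ (i, i) = 1" and "acyclic (off_diag_edges n B)"
proof -
  have B: "B \<in> zero_one_mats n" and pos: "all_eigenvalues_positive_real B"
    using assms by (auto simp: pos_eig_01_mats_def)
  then have Bc: "B \<in> carrier_mat n n"
    by (simp add: zero_one_mats_def)
  obtain es where char: "char_poly B = (\<Prod>a\<leftarrow>es. [:- a, 1:])" and len: "length es = n"
    using char_poly_factorized[OF Bc] by blast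
  have "set es \<subseteq> {1}"
    using zero_one_mat_positive_roots_eq_one[OF B char len] eigenvalue_if_root_char_poly[OF Bc char]
      pos unfolding all_eigenvalues_positive_real_def by blast
  then show diag: "\<And>i. i < n \<Longrightarrow> B $$ (i, i) = 1"
    using zero_one_mat_diag_eq_one_if_roots_eq_one[OF B char len] by blast
  let ?E = "off_diag_edges n B"
  have "char_matrix B 1 = adj_mat n ?E"
    using char_matrix_one_plus[OF adj_mat_carrier] one_plus_adj_mat_off_diag_edges[OF B diag] by metis
  then have "(adj_mat n ?E :: complex mat) ^\<^sub>m n = 0\<^sub>m n n"
    using char_matrix_pow_eq_zero_if_single_root[OF Bc char \<open>set es \<subseteq> {1}\<close>] by simp
  then show "acyclic ?E"
    by (intro acyclic_if_adj_mat_nilpotent[OF _ int_adj_mat_pow_eq_zero]) (auto simp: off_diag_edges_def)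
qed

lemma bij_betw_acyclic_digraphs_pos_eig_01_mats:
  "bij_betw (\<lambda>E. 1\<^sub>m n + adj_mat n E) (acyclic_digraphs n) (pos_eig_01_mats n)"
proof (rule bij_betw_byWitness[where f' = "off_diag_edges n"], goal_cases)
  case 1
  show ?case
  proof
    fix E assume "E \<in> acyclic_digraphs n"
    then have "E \<subseteq> {..<n} \<times> {..<n}" "acyclic E"
      by (simp_all add: acyclic_digraphs_def)
    then show "off_diag_edges n (1\<^sub>m n + adj_mat n E :: complex mat) = E"
      by (intro off_diag_edges_one_plus_adj_mat) (auto dest: acyclic_no_loop)
  qed
next
  case 2
  show ?case
    using pos_eig_01_mat_diag_acyclic(1)
    by (auto simp: pos_eig_01_mats_def intro!: one_plus_adj_mat_off_diag_edges)
next
  case 3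
  show ?case
    by (auto simp: pos_eig_01_mats_def zero_one_mats_def acyclic_digraphs_def
        all_eigenvalues_positive_real_def acyclic_no_loop dest: eigenvalue_one_plus_adj_mat)
next
  case 4
  show ?case
    using pos_eig_01_mat_diag_acyclic(2)
    by (auto simp: acyclic_digraphs_def off_diag_edges_def)
qed

theorem mainTheorem5:
  fixes n :: nat
  assumes "n \<ge> 1"
  shows "num_pos_eig_01_classes n = num_unlabeled_acyclic_digraphs n"
proof -
  have "digraph_iso n E1 E2 \<longleftrightarrow> perm_equiv n (1\<^sub>m n + adj_mat n E1) (1\<^sub>m n + adj_mat n E2)"
    if "E1 \<in> acyclic_digraphs n" "E2 \<in> acyclic_digraphs n" for E1 E2
    using that by (intro digraph_iso_iff_perm_equiv) (auto simp: acyclic_digraphs_def acyclic_no_loop)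
  from card_quotient_bij_betw[where R = "digraph_iso n" and S = "perm_equiv n",
      OF bij_betw_acyclic_digraphs_pos_eig_01_mats this]
  show ?thesis
    unfolding num_pos_eig_01_classes_def num_unlabeled_acyclic_digraphs_def by simp
qed

end
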